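(* Let $(\mathcal A,r)$ be a population game, $\mathcal G=(\mathcal H,\boldsymbol\eta,W)$ a connected community network, and $\mathbf f$ an imitation mechanism satisfying Assumption 1. Let $\mathcal Z\subseteq\mathcal X$ be the set of equilibrium points of the network imitation dynamics. Then $$\mathcal X^\bullet_{\boldsymbol\eta}\subseteq\mathcal Z\subseteq\mathcal X^\bullet.$$ Moreover: (i) if $f_{ij}(\mathbf y)>0$ for all $\mathbf y\in\mathcal Y$ and all $i,j\in\mathcal A$, then $\mathcal Z=\mathcal X^\bullet_{\boldsymbol\eta}$; (ii) if $f_{ij}(\mathbf y)=0$ for all $\mathbf y\in\mathcal Y$ and all $i,j\in\mathcal A$ with $r_i(\mathbf y)=r_j(\mathbf y)$, then $\mathcal Z=\mathcal X^\bullet$.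
   Context: Let $\mathcal A$ be a finite set of actions and $\mathcal Y=\{\mathbf y\in\mathbb R_+^{\mathcal A}:\mathbf 1^\top\mathbf y=1\}$. A population game $(\mathcal A,r)$ consists of reward functions $r_i:\mathcal Y\to\mathbb R$, $i\in\mathcal A$. A community network $\mathcal G=(\mathcal H,\boldsymbol\eta,W)$ consists of a finite set $\mathcal H$, a vector $\boldsymbol\eta\in\mathbb R^{\mathcal H}$ with $\eta_h>0$, $\sum_h\eta_h=1$, and a nonnegative matrix $W\in\mathbb R_+^{\mathcal H\times\mathcal H}$ with strictly positive diagonal; it is connected if $W$ is irreducible. System states: $\mathcal X=\{\mathbf x\in\mathbb R_+^{\mathcal A\times\mathcal H}:\mathbf 1^\top\mathbf x=\boldsymbol\eta^\top\}$, with population state $\mathbf y=\mathbf x\mathbf 1$. An imitation mechanism is a Lipschitz map $\mathbf f:\mathcal Y\to\mathbb R_+^{\mathcal A\times\mathcal A}$. The network imitation dynamics is $$\dot x_{ih}=\sum_{j\in\mathcal A}\sum_{k\in\mathcal H}\big(x_{jh}W_{hk}x_{ik}f_{ji}(\mathbf x\mathbf 1)-x_{ih}W_{hk}x_{jk}f_{ij}(\mathbf x\mathbf 1)\big).$$ Assumption 1: for all $i,j\in\mathcal A$ and $\mathbf y\in\mathcal Y$, $\operatorname{sgn}(f_{ij}(\mathbf y)-f_{ji}(\mathbf y))=\operatorname{sgn}(r_j(\mathbf y)-r_i(\mathbf y))$. Restricted Nash equilibria: $\mathcal Y^\bullet=\{\mathbf y\in\mathcal Y: y_i>0,\ y_j>0\Rightarrow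 r_i(\mathbf y)=r_j(\mathbf y)\}$; $\mathcal X^\bullet=\{\mathbf x\in\mathcal X:\mathbf x\mathbf 1\in\mathcal Y^\bullet\}$. A system state $\mathbf x$ is balanced if $\mathbf x=\mathbf x\mathbf 1\boldsymbol\eta^\top$, i.e. $x_{ih}=y_i\eta_h$ for all $i,h$ where $\mathbf y=\mathbf x\mathbf 1$. $\mathcal X^\bullet_{\boldsymbol\eta}$ denotes the set of balanced states in $\mathcal X^\bullet$. *)

theory Defs
  imports "HOL-Analysis.Analysis"
begin

text \<open>Actions are indexed by a finite type 'a, communities by a finite type 'h.
  A population state is a vector in real^'a, a system state an 'a x 'h matrix
  (x $ i $ h), an imitation mechanism is a map real^'a => real^'a^'a
  (f y $ i $ j = f_ij(y)), and rewards are r :: real^'a => real^'a (r y $ i = r_i(y)).\<close>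

definition pop_states :: "(real^'a::finite) set" where
  "pop_states = {y. (\<forall>i. 0 \<le> y $ i) \<and> (\<Sum>i\<in>UNIV. y $ i) = 1}"

definition sys_states :: "real^'h::finite \<Rightarrow> (real^'h^'a::finite) set" where
  "sys_states \<eta> = {x. (\<forall>i h. 0 \<le> x $ i $ h) \<and> (\<forall>h. (\<Sum>i\<in>UNIV. x $ i $ h) = \<eta> $ h)}"

definition pop_of :: "real^'h::finite^'a::finite \<Rightarrow> real^'a" where
  "pop_of x = x *v (\<chi> h. 1)"

definition community_network :: "real^'h::finite \<Rightarrow> real^'h^'h \<Rightarrow> bool" where
  "community_network \<eta> W \<longleftrightarrow>
     (\<forall>h. 0 < \<eta> $ h) \<and> (\<Sum>h\<in>UNIV. \<eta> $ h) = 1 \<and>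
     (\<forall>h k. 0 \<le> W $ h $ k) \<and> (\<forall>h. 0 < W $ h $ h)"

definition irreducible_mat :: "real^'h::finite^'h \<Rightarrow> bool" where
  "irreducible_mat W \<longleftrightarrow> (\<forall>h k. (h, k) \<in> {(a, b). 0 < W $ a $ b}\<^sup>+)"

definition imitation_mechanism :: "(real^'a::finite \<Rightarrow> real^'a^'a) \<Rightarrow> bool" where
  "imitation_mechanism f \<longleftrightarrow>
     (\<exists>L. L-lipschitz_on pop_states f) \<and> (\<forall>y\<in>pop_states. \<forall>i j. 0 \<le> f y $ i $ j)"

definition assumption1 :: "(real^'a::finite \<Rightarrow> real^'a) \<Rightarrow> (real^'a \<Rightarrow> real^'a^'a) \<Rightarrow> bool" where
  "assumption1 r f \<longleftrightarrow>
     (\<forall>y\<in>pop_states. \<forall>i j. sgn (f y $ i $ j - f y $ j $ i) = sgn (r y $ j - r y $ i))"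

definition net_imit_field ::
  "real^'h::finite^'h \<Rightarrow> (real^'a::finite \<Rightarrow> real^'a^'a) \<Rightarrow> real^'h^'a \<Rightarrow> real^'h^'a" where
  "net_imit_field W f x = (\<chi> i h. \<Sum>j\<in>UNIV. \<Sum>k\<in>UNIV.
      x $ j $ h * W $ h $ k * x $ i $ k * f (pop_of x) $ j $ i
      - x $ i $ h * W $ h $ k * x $ j $ k * f (pop_of x) $ i $ j)"

definition equilibria ::
  "real^'h::finite \<Rightarrow> real^'h^'h \<Rightarrow> (real^'a::finite \<Rightarrow> real^'a^'a) \<Rightarrow> (real^'h^'a) set" where
  "equilibria \<eta> W f = {x \<in> sys_states \<eta>. net_imit_field W f x = 0}"

definition restricted_nash_pop :: "(real^'a::finite \<Rightarrow> real^'a) \<Rightarrow> (real^'a) set" where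
  "restricted_nash_pop r = {y \<in> pop_states. \<forall>i j. 0 < y $ i \<and> 0 < y $ j \<longrightarrow> r y $ i = r y $ j}"

definition restricted_nash_sys ::
  "real^'h::finite \<Rightarrow> (real^'a::finite \<Rightarrow> real^'a) \<Rightarrow> (real^'h^'a) set" where
  "restricted_nash_sys \<eta> r = {x \<in> sys_states \<eta>. pop_of x \<in> restricted_nash_pop r}"

definition balanced :: "real^'h::finite \<Rightarrow> real^'h^'a::finite \<Rightarrow> bool" where
  "balanced \<eta> x \<longleftrightarrow> (\<forall>i h. x $ i $ h = pop_of x $ i * \<eta> $ h)"

definition restricted_nash_balanced ::
  "real^'h::finite \<Rightarrow> (real^'a::finite \<Rightarrow> real^'a) \<Rightarrow> (real^'h^'a) set" where
  "restricted_nash_balanced \<eta> r = {x \<in> restricted_nash_sys \<eta> r. balanced \<eta> x}"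

end

theory Submission
  imports Defs
begin

text \<open>
  Write \<open>m\<^sub>i\<^sub>h = \<Sum>\<^sub>k W\<^sub>h\<^sub>k x\<^sub>i\<^sub>k\<close> for the exposure of community \<open>h\<close> to action \<open>i\<close>; then
  \<open>x\<^sub>i\<^sub>h' = (\<Sum>\<^sub>j f\<^sub>j\<^sub>i x\<^sub>j\<^sub>h) m\<^sub>i\<^sub>h - x\<^sub>i\<^sub>h \<Sum>\<^sub>j f\<^sub>i\<^sub>j m\<^sub>j\<^sub>h\<close>.
  Balanced restricted Nash states, and (under (ii)) all restricted Nash states, are rest
  points term by term.

  Conversely, at a rest point let \<open>j\<close> be a worst action in the support. The communities
  containing a strictly better action are closed under predecessors of the network: were a
  predecessor free of them, the rest-point equation of a better action there would force
  every action, hence the community, to be empty. By irreducibility better actions are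
  present everywhere. In the community minimising \<open>(\<Sum>\<^sub>l f\<^sub>j\<^sub>l x\<^sub>l\<^sub>h) / x\<^sub>j\<^sub>h\<close>, stationarity of
  \<open>x\<^sub>j\<^sub>h\<close> makes the outflow of \<open>j\<close> at most its inflow, while the better action present
  there makes it strictly larger.

  For (i), positive rates force each column of a rest point to be proportional to the
  exposures, \<open>x\<^sub>l\<^sub>h = c\<^sub>h m\<^sub>l\<^sub>h\<close>; then \<open>x\<^sub>a - t \<eta>\<close>, with \<open>t\<close> the least ratio \<open>x\<^sub>a\<^sub>k / \<eta>\<^sub>k\<close>, is a
  nonnegative solution of the same equation vanishing somewhere, so by irreducibility it
  vanishes identically.
\<close>

lemma finite_type_ex_arg_min:
  fixes f :: "'a::finite \<Rightarrow> 'b::linorder"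
  assumes "P a"
  shows "\<exists>x. P x \<and> (\<forall>y. P y \<longrightarrow> f x \<le> f y)"
  using ex_is_arg_min_if_finite[of "{x. P x}" f] assms by (auto simp: is_arg_min_linorder)

lemma irreducible_mat_forward_closed:
  assumes "irreducible_mat W" "h \<in> G" "\<And>h k. 0 < W$h$k \<Longrightarrow> h \<in> G \<Longrightarrow> k \<in> G"
  shows "k \<in> G"
proof -
  have "(h, k) \<in> {(a, b). 0 < W$a$b}\<^sup>+"
    using assms(1) by (simp add: irreducible_mat_def)
  then show ?thesis
    by (induction rule: trancl_induct) (use assms(2,3) in auto)
qed

lemma irreducible_mat_backward_closed:
  assumes "irreducible_mat W" "k \<in> G" "\<And>h k. 0 < W$h$k \<Longrightarrow> k \<in> G \<Longrightarrow> h \<in> G"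
  shows "h \<in> G"
  using irreducible_mat_forward_closed[OF assms(1), of h "- G" k] assms(2,3) by blast

lemma irreducible_mat_zero_propagates:
  fixes z :: "'h::finite \<Rightarrow> real"
  assumes "irreducible_mat W" "\<And>h k. 0 \<le> W$h$k" "\<And>k. 0 \<le> z k" "z k0 = 0"
    and "\<And>k. z k = 0 \<Longrightarrow> (\<Sum>m\<in>UNIV. W$k$m * z m) = 0"
  shows "z k = 0"
proof -
  have "k \<in> {k. z k = 0}"
  proof (rule irreducible_mat_forward_closed[OF assms(1)])
    show "k0 \<in> {k. z k = 0}" using assms(4) by simp
  next
    fix h k assume "0 < W$h$k" "h \<in> {k. z k = 0}"
    moreover have "\<forall>m\<in>UNIV. W$h$m * z m = 0"
      using assms(5)[of h] \<open>h \<in> {k. z k = 0}\<close>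
      by (subst sum_nonneg_eq_0_iff[symmetric]) (auto intro: mult_nonneg_nonneg assms(2,3))
    ultimately have "W$h$k * z k = 0" "0 < W$h$k" by blast+
    then show "k \<in> {k. z k = 0}" by simp
  qed
  then show ?thesis by simp
qed

definition imitation_compatible :: "real^'a::finite^'a \<Rightarrow> real^'a \<Rightarrow> bool" where
  "imitation_compatible F R \<longleftrightarrow> (\<forall>i j. sgn (F$i$j - F$j$i) = sgn (R$j - R$i))"

lemma assumption1_imp_imitation_compatible:
  "assumption1 r f \<Longrightarrow> y \<in> pop_states \<Longrightarrow> imitation_compatible (f y) (r y)"
  by (simp add: assumption1_def imitation_compatible_def)

lemma imitation_compatible_less:
  assumes "imitation_compatible F R" "R$i < R$j"
  shows "F$j$i < F$i$j"
  using assms sgn_greater[of "F$i$j - F$j$i"] by (simp add: imitation_compatible_def)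

lemma imitation_compatible_eq:
  assumes "imitation_compatible F R" "R$i = R$j"
  shows "F$i$j = F$j$i"
  using assms sgn_0_0[of "F$i$j - F$j$i"] by (simp add: imitation_compatible_def)

lemma imitation_compatible_le:
  assumes "imitation_compatible F R" "R$i \<le> R$j"
  shows "F$j$i \<le> F$i$j"
  using assms(2) imitation_compatible_less[OF assms(1), of i j]
    imitation_compatible_eq[OF assms(1), of i j]
  by (cases "R$i < R$j") auto

definition support_indifferent :: "real^'a::finite \<Rightarrow> real^'a \<Rightarrow> bool" where
  "support_indifferent R y \<longleftrightarrow> (\<forall>i j. 0 < y$i \<longrightarrow> 0 < y$j \<longrightarrow> R$i = R$j)"

lemma restricted_nash_pop_iff:
  "y \<in> restricted_nash_pop r \<longleftrightarrow> y \<in> pop_states \<and> support_indifferent (r y) y"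
  by (auto simp: restricted_nash_pop_def support_indifferent_def)

definition neighbour_mass :: "real^'h::finite^'h \<Rightarrow> real^'h^'a::finite \<Rightarrow> 'a \<Rightarrow> 'h \<Rightarrow> real" where
  "neighbour_mass W x i h = (\<Sum>k\<in>UNIV. W$h$k * x$i$k)"

text \<open>The network imitation field with the imitation matrix frozen at \<open>F\<close>: only the
  value of \<open>f\<close> at the current population state matters for rest points.\<close>
definition imit_field :: "real^'h::finite^'h \<Rightarrow> real^'a::finite^'a \<Rightarrow> real^'h^'a \<Rightarrow> real^'h^'a" where
  "imit_field W F x = (\<chi> i h. (\<Sum>j\<in>UNIV. F$j$i * x$j$h) * neighbour_mass W x i h
                              - x$i$h * (\<Sum>j\<in>UNIV. F$i$j * neighbour_mass W x j h))"

lemma imit_field_nth: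
  "imit_field W F x $ i $ h = (\<Sum>j\<in>UNIV. F$j$i * x$j$h * neighbour_mass W x i h
                                          - x$i$h * F$i$j * neighbour_mass W x j h)"
  by (simp add: imit_field_def sum_subtractf sum_distrib_left sum_distrib_right mult.assoc)

lemma imit_field_eq_0_iff:
  "imit_field W F x = 0 \<longleftrightarrow>
     (\<forall>i h. (\<Sum>j\<in>UNIV. F$j$i * x$j$h) * neighbour_mass W x i h
             = x$i$h * (\<Sum>j\<in>UNIV. F$i$j * neighbour_mass W x j h))"
  by (simp add: imit_field_def vec_eq_iff)

lemma net_imit_field_eq_imit_field: "net_imit_field W f x = imit_field W (f (pop_of x)) x"
  unfolding vec_eq_iff imit_field_nth
  by (simp add: net_imit_field_def neighbour_mass_def sum_subtractf sum_distrib_left mult_ac)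

lemma pop_of_nth: "pop_of x $ i = (\<Sum>h\<in>UNIV. x$i$h)"
  by (simp add: pop_of_def matrix_vector_mult_def)

locale network_state =
  fixes \<eta> :: "real^'h::finite" and W :: "real^'h^'h" and x :: "real^'h^'a::finite"
  assumes network: "community_network \<eta> W" and state: "x \<in> sys_states \<eta>"
begin

abbreviation y :: "real^'a" where "y \<equiv> pop_of x"
abbreviation m :: "'a \<Rightarrow> 'h \<Rightarrow> real" where "m \<equiv> neighbour_mass W x"

lemma x_nonneg: "0 \<le> x$i$h"
  using state by (simp add: sys_states_def)

lemma x_column_sum: "(\<Sum>i\<in>UNIV. x$i$h) = \<eta>$h"
  using state by (simp add: sys_states_def)

lemma eta_pos: "0 < \<eta>$h" and eta_sum: "(\<Sum>h\<in>UNIV. \<eta>$h) = 1"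
  and W_nonneg: "0 \<le> W$h$k" and W_diag_pos: "0 < W$h$h"
  using network by (auto simp: community_network_def)

lemma x_le_pop: "x$i$h \<le> y$i"
  unfolding pop_of_nth by (rule member_le_sum) (auto simp: x_nonneg)

lemma pop_nonneg: "0 \<le> y$i"
  unfolding pop_of_nth by (auto intro: sum_nonneg x_nonneg)

lemma pop_pos_iff: "0 < y$i \<longleftrightarrow> (\<exists>h. 0 < x$i$h)"
  using x_nonneg[of i] x_le_pop[of i]
  unfolding pop_of_nth by (metis less_le_trans not_less sum_nonpos)

lemma pop_in_pop_states: "y \<in> pop_states"
proof -
  have "(\<Sum>i\<in>UNIV. y$i) = (\<Sum>h\<in>UNIV. \<eta>$h)"
    unfolding pop_of_nth by (subst sum.swap) (simp add: x_column_sum)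
  then show ?thesis using eta_sum pop_nonneg by (simp add: pop_states_def)
qed

lemma mass_nonneg: "0 \<le> m i h"
  unfolding neighbour_mass_def by (auto intro: sum_nonneg mult_nonneg_nonneg W_nonneg x_nonneg)

lemma mass_ge: "W$h$k * x$i$k \<le> m i h"
  unfolding neighbour_mass_def
  by (rule member_le_sum[where f = "\<lambda>k. W$h$k * x$i$k"]) (auto intro: mult_nonneg_nonneg W_nonneg x_nonneg)

lemma mass_pos:
  assumes "0 < x$i$h"
  shows "0 < m i h"
  using mult_pos_pos[OF W_diag_pos[of h] assms] mass_ge[of h h i] by linarith

lemma mass_pos_imp_pop_pos:
  assumes "0 < m i h"
  shows "0 < y$i"
proof (rule ccontr)
  assume "\<not> 0 < y$i"
  then have "x$i$k = 0" for k
    using x_le_pop[of i k] x_nonneg[of i k] by linarith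
  then show False using assms by (simp add: neighbour_mass_def)
qed

lemma mass_zero_imp_x_zero: "m i h = 0 \<Longrightarrow> x$i$h = 0"
  using mass_pos[of i h] x_nonneg[of i h] by linarith

lemma mass_column_sum: "(\<Sum>i\<in>UNIV. m i h) = (\<Sum>k\<in>UNIV. W$h$k * \<eta>$k)"
  unfolding neighbour_mass_def
  by (subst sum.swap) (simp add: sum_distrib_left[symmetric] x_column_sum)

lemma weighted_eta_pos: "0 < (\<Sum>k\<in>UNIV. W$h$k * \<eta>$k)"
proof -
  have "W$h$h * \<eta>$h \<le> (\<Sum>k\<in>UNIV. W$h$k * \<eta>$k)"
    by (rule member_le_sum[where f = "\<lambda>k. W$h$k * \<eta>$k"])
       (auto intro: mult_nonneg_nonneg W_nonneg less_imp_le eta_pos)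
  moreover have "0 < W$h$h * \<eta>$h" using W_diag_pos eta_pos by simp
  ultimately show ?thesis by linarith
qed

lemma balanced_imp_imit_field_zero:
  assumes "balanced \<eta> x" "support_indifferent R y" "imitation_compatible F R"
  shows "imit_field W F x = 0"
proof -
  define c where "c h = (\<Sum>k\<in>UNIV. W$h$k * \<eta>$k)" for h
  have x_eq: "x$l$h = y$l * \<eta>$h" for l h
    using assms(1) by (simp add: balanced_def)
  have m_eq: "m l h = y$l * c h" for l h
    unfolding neighbour_mass_def c_def x_eq by (simp add: sum_distrib_left mult_ac)
  have "F$j$i * x$j$h * m i h - x$i$h * F$i$j * m j h = 0" for i j h
  proof (cases "0 < y$i \<and> 0 < y$j")
    case True
    then have "F$i$j = F$j$i"
      using assms(2) imitation_compatible_eq[OF assms(3)] by (simp add: support_indifferent_def)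
    then show ?thesis by (simp add: x_eq m_eq mult_ac)
  next
    case False
    then have "y$i = 0 \<or> y$j = 0" using pop_nonneg[of i] pop_nonneg[of j] by linarith
    then show ?thesis by (auto simp: x_eq m_eq)
  qed
  then show ?thesis by (simp add: vec_eq_iff imit_field_nth)
qed

lemma imit_field_zero_if_indifferent_inactive:
  assumes "support_indifferent R y" "\<And>i j. R$i = R$j \<Longrightarrow> F$i$j = 0"
  shows "imit_field W F x = 0"
proof -
  have term_zero: "F$i$j * x$i$h * m j h = 0" for i j h
  proof (cases "0 < x$i$h \<and> 0 < m j h")
    case True
    then have "R$i = R$j"
      using assms(1) pop_pos_iff mass_pos_imp_pop_pos by (auto simp: support_indifferent_def)
    then show ?thesis using assms(2) by simp
  next
    case False
    then have "x$i$h = 0 \<or> m j h = 0"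
      using x_nonneg[of i h] mass_nonneg[of j h] by (auto simp: less_le)
    then show ?thesis by auto
  qed
  have term_zero': "x$i$h * F$i$j * m j h = 0" for i j h
    using term_zero[of i j h] by (simp add: mult_ac)
  show ?thesis
    unfolding vec_eq_iff imit_field_nth term_zero term_zero' by simp
qed

lemma imit_field_zero_imp_ex_outflow_le_inflow:
  assumes "\<And>i j. 0 \<le> F$i$j" "imit_field W F x = 0" "0 < y$j"
  shows "\<exists>h. 0 < x$j$h \<and> (\<Sum>l\<in>UNIV. F$j$l * x$l$h) \<le> (\<Sum>l\<in>UNIV. F$l$j * x$l$h)"
proof -
  define out where "out k = (\<Sum>l\<in>UNIV. F$j$l * x$l$k)" for k
  define \<psi> where "\<psi> k = out k / x$j$k" for k
  obtain k0 where "0 < x$j$k0" using assms(3) pop_pos_iff by blast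
  then obtain h where h: "0 < x$j$h" and h_min: "\<And>k. 0 < x$j$k \<Longrightarrow> \<psi> h \<le> \<psi> k"
    using finite_type_ex_arg_min[of "\<lambda>k. 0 < x$j$k" k0 \<psi>] by blast
  have out_ge: "\<psi> h * x$j$k \<le> out k" for k
  proof (cases "0 < x$j$k")
    case True
    then show ?thesis using h_min[OF True] by (simp add: \<psi>_def pos_le_divide_eq)
  next
    case False
    then have "x$j$k = 0" using x_nonneg[of j k] by simp
    then show ?thesis by (simp add: out_def sum_nonneg assms(1) x_nonneg)
  qed
  have "\<psi> h * m j h = (\<Sum>k\<in>UNIV. W$h$k * (\<psi> h * x$j$k))"
    by (simp add: neighbour_mass_def sum_distrib_left mult_ac)
  also have "\<dots> \<le> (\<Sum>k\<in>UNIV. W$h$k * out k)"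
    by (rule sum_mono) (simp add: mult_left_mono out_ge W_nonneg)
  also have "\<dots> = (\<Sum>l\<in>UNIV. F$j$l * m l h)"
    unfolding out_def neighbour_mass_def sum_distrib_left by (subst sum.swap) (simp add: mult_ac)
  finally have "\<psi> h * m j h \<le> (\<Sum>l\<in>UNIV. F$j$l * m l h)" .
  then have "out h * m j h \<le> x$j$h * (\<Sum>l\<in>UNIV. F$j$l * m l h)"
    using h mult_left_mono[of _ _ "x$j$h"] by (fastforce simp: \<psi>_def)
  also have "\<dots> = (\<Sum>l\<in>UNIV. F$l$j * x$l$h) * m j h"
    using assms(2) by (simp add: imit_field_eq_0_iff)
  finally show ?thesis
    using h mass_pos[OF h] by (auto simp: out_def intro: mult_right_le_imp_le)
qed

lemma imit_field_zero_imp_better_action_everywhere: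
  assumes "irreducible_mat W" "\<And>i j. 0 \<le> F$i$j" "imitation_compatible F R" "imit_field W F x = 0"
    and "\<rho> < R$l0" "0 < x$l0$k0"
  shows "\<exists>l. \<rho> < R$l \<and> 0 < x$l$h"
proof -
  let ?G = "{h. \<exists>l. \<rho> < R$l \<and> 0 < x$l$h}"
  have "h \<in> ?G"
  proof (rule irreducible_mat_backward_closed[OF assms(1)])
    show "k0 \<in> ?G" using assms(5,6) by blast
  next
    fix h k assume edge: "0 < W$h$k" and "k \<in> ?G"
    then obtain l1 where l1: "\<rho> < R$l1" "0 < x$l1$k" by blast
    show "h \<in> ?G"
    proof (rule ccontr)
      assume "h \<notin> ?G"
      then have absent: "x$l$h = 0" if "\<rho> < R$l" for l
        using that x_nonneg[of l h] by force
      have "0 < W$h$k * x$l1$k" using edge l1 by simp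
      then have "0 < m l1 h" using mass_ge[of h k l1] by linarith
      moreover have "(\<Sum>l\<in>UNIV. F$l$l1 * x$l$h) * m l1 h = 0"
        using assms(4) absent[OF l1(1)] by (simp add: imit_field_eq_0_iff)
      ultimately have "(\<Sum>l\<in>UNIV. F$l$l1 * x$l$h) = 0" by simp
      then have zero_terms: "\<forall>l\<in>UNIV. F$l$l1 * x$l$h = 0"
        by (subst (asm) sum_nonneg_eq_0_iff) (auto intro: mult_nonneg_nonneg assms(2) x_nonneg)
      have "x$l$h = 0" for l
      proof (cases "\<rho> < R$l")
        case False
        then have "F$l1$l < F$l$l1" using imitation_compatible_less[OF assms(3)] l1(1) by simp
        then have "0 < F$l$l1" using assms(2)[of l1 l] by linarith
        moreover have "F$l$l1 * x$l$h = 0" using zero_terms by blast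
        ultimately show ?thesis by simp
      qed (rule absent)
      then have "\<eta>$h = 0" using x_column_sum[of h] by simp
      then show False using eta_pos[of h] by simp
    qed
  qed
  then show ?thesis by blast
qed

lemma imit_field_zero_imp_support_indifferent:
  assumes "irreducible_mat W" "\<And>i j. 0 \<le> F$i$j" "imitation_compatible F R" "imit_field W F x = 0"
  shows "support_indifferent R y"
proof (rule ccontr)
  assume "\<not> support_indifferent R y"
  then obtain a b where ab: "0 < y$a" "0 < y$b" "R$a \<noteq> R$b"
    by (auto simp: support_indifferent_def)
  obtain j where j: "0 < y$j" and j_min: "\<And>l. 0 < y$l \<Longrightarrow> R$j \<le> R$l"
    using finite_type_ex_arg_min[of "\<lambda>l. 0 < y$l" a "\<lambda>l. R$l"] ab(1) by blast
  have "R$j < R$a \<or> R$j < R$b"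
    using ab(3) j_min[OF ab(1)] j_min[OF ab(2)] by linarith
  then obtain l0 where l0: "0 < y$l0" "R$j < R$l0"
    using ab(1,2) by blast
  obtain k0 where "0 < x$l0$k0" using l0(1) pop_pos_iff by blast
  obtain h where h: "0 < x$j$h"
    and out_le_in: "(\<Sum>l\<in>UNIV. F$j$l * x$l$h) \<le> (\<Sum>l\<in>UNIV. F$l$j * x$l$h)"
    using imit_field_zero_imp_ex_outflow_le_inflow[OF assms(2,4) j] by blast
  obtain l1 where l1: "R$j < R$l1" "0 < x$l1$h"
    using imit_field_zero_imp_better_action_everywhere[OF assms l0(2) \<open>0 < x$l0$k0\<close>] by blast
  have "(\<Sum>l\<in>UNIV. F$l$j * x$l$h) < (\<Sum>l\<in>UNIV. F$j$l * x$l$h)"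
  proof (rule sum_strict_mono_ex1)
    show "\<forall>l\<in>UNIV. F$l$j * x$l$h \<le> F$j$l * x$l$h"
    proof
      fix l
      show "F$l$j * x$l$h \<le> F$j$l * x$l$h"
      proof (cases "0 < x$l$h")
        case True
        then have "R$j \<le> R$l" using j_min pop_pos_iff by blast
        then have "F$l$j \<le> F$j$l" by (rule imitation_compatible_le[OF assms(3)])
        then show ?thesis using True by (simp add: mult_right_mono)
      next
        case False
        then have "x$l$h = 0" using x_nonneg[of l h] by simp
        then show ?thesis by simp
      qed
    qed
    have "F$l1$j * x$l1$h < F$j$l1 * x$l1$h"
      using imitation_compatible_less[OF assms(3) l1(1)] l1(2) by simp
    then show "\<exists>l\<in>UNIV. F$l$j * x$l$h < F$j$l * x$l$h" by blast
  qed simp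
  with out_le_in show False by simp
qed

lemma imit_field_zero_imp_proportional:
  assumes "\<And>i j. 0 < F$i$j" "imitation_compatible F R" "support_indifferent R y"
    and "imit_field W F x = 0"
  shows "\<exists>c. \<forall>l. x$l$h = c * m l h"
proof -
  define \<rho> where "\<rho> l = x$l$h / m l h" for l
  have "\<exists>l. 0 < m l h"
  proof (rule ccontr)
    assume "\<nexists>l. 0 < m l h"
    then have "m l h = 0" for l using mass_nonneg[of l h] by (simp add: not_less order.antisym)
    then show False using mass_column_sum[of h] weighted_eta_pos[of h] by simp
  qed
  then obtain l0 where "0 < m l0 h" ..
  then obtain j where j: "0 < m j h" and j_min: "\<And>l. 0 < m l h \<Longrightarrow> \<rho> j \<le> \<rho> l"
    using finite_type_ex_arg_min[of "\<lambda>l. 0 < m l h" l0 \<rho>] by blast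
  have F_sym: "F$l$j = F$j$l" if "0 < m l h" for l
    using imitation_compatible_eq[OF assms(2)] assms(3) mass_pos_imp_pop_pos[OF j]
      mass_pos_imp_pop_pos[OF that]
    unfolding support_indifferent_def by metis
  define T where "T l = F$l$j * x$l$h * m j h - x$j$h * F$j$l * m l h" for l
  have T_active: "T l = F$j$l * (x$l$h * m j h - x$j$h * m l h)" if "0 < m l h" for l
    using F_sym[OF that] by (simp add: T_def algebra_simps)
  have T_nonneg: "0 \<le> T l" for l
  proof (cases "0 < m l h")
    case True
    have "x$j$h / m j h \<le> x$l$h / m l h"
      using j_min[OF True] by (simp add: \<rho>_def)
    then have "x$j$h * m l h \<le> x$l$h * m j h"
      using j True by (simp add: field_simps)
    then show ?thesis using T_active[OF True] assms(1)[of j l] by simp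
  next
    case False
    then have "m l h = 0" using mass_nonneg[of l h] by simp
    then show ?thesis using mass_zero_imp_x_zero by (simp add: T_def)
  qed
  have "(\<Sum>l\<in>UNIV. T l) = imit_field W F x $ j $ h"
    by (simp add: T_def imit_field_nth)
  then have T_zero: "T l = 0" for l
    using assms(4) T_nonneg sum_nonneg_eq_0_iff[of UNIV T] by simp
  have "x$l$h = \<rho> j * m l h" for l
  proof (cases "0 < m l h")
    case True
    then have "x$l$h * m j h = x$j$h * m l h"
      using T_zero[of l] T_active[OF True] assms(1)[of j l] by simp
    then show ?thesis using j by (simp add: \<rho>_def field_simps)
  next
    case False
    then have "m l h = 0" using mass_nonneg[of l h] by simp
    then show ?thesis using mass_zero_imp_x_zero by simp
  qed
  then show ?thesis by blast
qed

lemma proportional_imp_balanced: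
  fixes c :: "'h \<Rightarrow> real"
  assumes "irreducible_mat W" "\<And>l h. x$l$h = c h * m l h"
  shows "balanced \<eta> x"
proof -
  have eta_eq: "\<eta>$h = c h * (\<Sum>k\<in>UNIV. W$h$k * \<eta>$k)" for h
  proof -
    have "\<eta>$h = (\<Sum>l\<in>UNIV. c h * m l h)"
      unfolding x_column_sum[of h, symmetric] by (rule sum.cong) (simp_all add: assms(2)[of _ h])
    then show ?thesis by (simp add: sum_distrib_left[symmetric] mass_column_sum)
  qed
  have c_pos: "0 < c h" for h
    using eta_eq[of h] eta_pos[of h] weighted_eta_pos[of h] by (simp add: zero_less_mult_iff)
  show ?thesis unfolding balanced_def
  proof (intro allI)
    fix a h
    obtain h0 where h0_min: "\<And>k. x$a$h0 / \<eta>$h0 \<le> x$a$k / \<eta>$k"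
      using finite_type_ex_arg_min[of "\<lambda>_. True" h "\<lambda>k. x$a$k / \<eta>$k"] by blast
    define t where "t = x$a$h0 / \<eta>$h0"
    define z where "z k = x$a$k - t * \<eta>$k" for k
    have "z k = 0" for k
    proof (rule irreducible_mat_zero_propagates[OF assms(1) W_nonneg])
      show "0 \<le> z k" for k
        using h0_min[of k] eta_pos[of k] by (simp add: z_def t_def field_simps)
      show "z h0 = 0"
        using eta_pos[of h0] by (simp add: z_def t_def)
      fix k
      have "z k = c k * m a k - t * (c k * (\<Sum>n\<in>UNIV. W$k$n * \<eta>$n))"
        using assms(2)[of a k] eta_eq[of k] by (simp add: z_def)
      also have "\<dots> = c k * (\<Sum>n\<in>UNIV. W$k$n * z n)"
        by (simp add: z_def neighbour_mass_def algebra_simps sum_subtractf sum_distrib_left)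
      finally show "z k = 0 \<Longrightarrow> (\<Sum>n\<in>UNIV. W$k$n * z n) = 0"
        using c_pos[of k] by simp
    qed
    then have x_a: "x$a$k = t * \<eta>$k" for k by (simp add: z_def)
    then have "y$a = t" by (simp add: pop_of_nth sum_distrib_left[symmetric] eta_sum)
    then show "x$a$h = y$a * \<eta>$h" using x_a by simp
  qed
qed

end

lemma restricted_nash_balanced_subset_equilibria:
  assumes "community_network \<eta> W" "assumption1 r f"
  shows "restricted_nash_balanced \<eta> r \<subseteq> equilibria \<eta> W f"
proof
  fix x assume "x \<in> restricted_nash_balanced \<eta> r"
  then have x: "x \<in> sys_states \<eta>" "balanced \<eta> x" "support_indifferent (r (pop_of x)) (pop_of x)"
    by (auto simp: restricted_nash_balanced_def restricted_nash_sys_def restricted_nash_pop_iff)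
  interpret network_state \<eta> W x using assms(1) x(1) by unfold_locales
  have "imit_field W (f y) x = 0"
    using balanced_imp_imit_field_zero[OF x(2,3)]
      assumption1_imp_imitation_compatible[OF assms(2) pop_in_pop_states] by blast
  then show "x \<in> equilibria \<eta> W f"
    using x(1) by (simp add: equilibria_def net_imit_field_eq_imit_field)
qed

lemma equilibria_subset_restricted_nash_sys:
  assumes "community_network \<eta> W" "irreducible_mat W" "imitation_mechanism f" "assumption1 r f"
  shows "equilibria \<eta> W f \<subseteq> restricted_nash_sys \<eta> r"
proof
  fix x assume "x \<in> equilibria \<eta> W f"
  then have x: "x \<in> sys_states \<eta>" "imit_field W (f (pop_of x)) x = 0"
    by (auto simp: equilibria_def net_imit_field_eq_imit_field)
  interpret network_state \<eta> W x using assms(1) x(1) by unfold_locales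
  have "\<And>i j. 0 \<le> f y $ i $ j"
    using assms(3) pop_in_pop_states by (simp add: imitation_mechanism_def)
  then have "support_indifferent (r y) y"
    using imit_field_zero_imp_support_indifferent[OF assms(2) _ _ x(2)]
      assumption1_imp_imitation_compatible[OF assms(4) pop_in_pop_states] by blast
  then show "x \<in> restricted_nash_sys \<eta> r"
    using x(1) pop_in_pop_states by (simp add: restricted_nash_sys_def restricted_nash_pop_iff)
qed

lemma equilibria_eq_restricted_nash_balanced:
  assumes "community_network \<eta> W" "irreducible_mat W" "imitation_mechanism f" "assumption1 r f"
    and "\<forall>y\<in>pop_states. \<forall>i j. 0 < f y $ i $ j"
  shows "equilibria \<eta> W f = restricted_nash_balanced \<eta> r"
proof
  show "equilibria \<eta> W f \<subseteq> restricted_nash_balanced \<eta> r"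
  proof
    fix x assume "x \<in> equilibria \<eta> W f"
    then have x: "x \<in> restricted_nash_sys \<eta> r" "imit_field W (f (pop_of x)) x = 0"
      using equilibria_subset_restricted_nash_sys[OF assms(1-4)]
      by (auto simp: equilibria_def net_imit_field_eq_imit_field)
    then have xs: "x \<in> sys_states \<eta>" and nash: "support_indifferent (r (pop_of x)) (pop_of x)"
      by (auto simp: restricted_nash_sys_def restricted_nash_pop_iff)
    interpret network_state \<eta> W x using assms(1) xs by unfold_locales
    have "\<exists>c. \<forall>l. x$l$h = c * m l h" for h
      using imit_field_zero_imp_proportional[OF _ _ nash x(2)] assms(5) pop_in_pop_states
        assumption1_imp_imitation_compatible[OF assms(4) pop_in_pop_states] by blast
    then obtain c where "\<And>l h. x$l$h = c h * m l h" by metis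
    then have "balanced \<eta> x" by (rule proportional_imp_balanced[OF assms(2)])
    then show "x \<in> restricted_nash_balanced \<eta> r"
      using x(1) by (simp add: restricted_nash_balanced_def)
  qed
qed (rule restricted_nash_balanced_subset_equilibria[OF assms(1,4)])

lemma equilibria_eq_restricted_nash_sys:
  assumes "community_network \<eta> W" "irreducible_mat W" "imitation_mechanism f" "assumption1 r f"
    and "\<forall>y\<in>pop_states. \<forall>i j. r y $ i = r y $ j \<longrightarrow> f y $ i $ j = 0"
  shows "equilibria \<eta> W f = restricted_nash_sys \<eta> r"
proof
  show "restricted_nash_sys \<eta> r \<subseteq> equilibria \<eta> W f"
  proof
    fix x assume "x \<in> restricted_nash_sys \<eta> r"
    then have x: "x \<in> sys_states \<eta>" "pop_of x \<in> pop_states"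
      "support_indifferent (r (pop_of x)) (pop_of x)"
      by (auto simp: restricted_nash_sys_def restricted_nash_pop_iff)
    interpret network_state \<eta> W x using assms(1) x(1) by unfold_locales
    have "imit_field W (f y) x = 0"
      using imit_field_zero_if_indifferent_inactive[OF x(3)] assms(5) x(2) by blast
    then show "x \<in> equilibria \<eta> W f"
      using x(1) by (simp add: equilibria_def net_imit_field_eq_imit_field)
  qed
qed (rule equilibria_subset_restricted_nash_sys[OF assms(1-4)])

theorem theorem1:
  fixes r :: "real^'a::finite \<Rightarrow> real^'a"
    and \<eta> :: "real^'h::finite"
    and W :: "real^'h^'h"
    and f :: "real^'a \<Rightarrow> real^'a^'a"
  assumes "community_network \<eta> W"
    and "irreducible_mat W"
    and "imitation_mechanism f"
    and "assumption1 r f"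
  shows "restricted_nash_balanced \<eta> r \<subseteq> equilibria \<eta> W f
       \<and> equilibria \<eta> W f \<subseteq> restricted_nash_sys \<eta> r
       \<and> ((\<forall>y\<in>pop_states. \<forall>i j. 0 < f y $ i $ j)
            \<longrightarrow> equilibria \<eta> W f = restricted_nash_balanced \<eta> r)
       \<and> ((\<forall>y\<in>pop_states. \<forall>i j. r y $ i = r y $ j \<longrightarrow> f y $ i $ j = 0)
            \<longrightarrow> equilibria \<eta> W f = restricted_nash_sys \<eta> r)"
  using restricted_nash_balanced_subset_equilibria[OF assms(1,4)]
    equilibria_subset_restricted_nash_sys[OF assms]
    equilibria_eq_restricted_nash_balanced[OF assms]
    equilibria_eq_restricted_nash_sys[OF assms]
  by blast

end
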